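(* Let $m,k\in\mathbb{N}$ with $m\leq 2^k$. Then the matrix ring $\mathbb{M}_m(\mathbb{F}_2)$ is $n$-torsion clean for some natural number $n\leq 2^k$.
   Context: $\mathbb{F}_2$ is the field with two elements and $\mathbb{M}_m(\mathbb{F}_2)$ the ring of $m\times m$ matrices over it. A ring $R$ is $n$-torsion clean if every $r\in R$ can be written $r=e+u$ with $e^2=e$, $u$ a unit, $u^n=1$, and $n$ is the smallest natural number with this property. *)

theory Defs
  imports "Jordan_Normal_Form.Matrix" "HOL-Library.Z2"
begin

text \<open>The field with two elements is the type bit from HOL-Library.Z2.
  The ring of m x m matrices over it is the HOL-Algebra ring ring_mat TYPE(bit) m ().\<close>

definition clean_with_torsion :: "('a, 'b) ring_scheme \<Rightarrow> nat \<Rightarrow> bool" where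
  "clean_with_torsion R n \<longleftrightarrow>
     (\<forall>r \<in> carrier R. \<exists>e \<in> carrier R. \<exists>u \<in> Units R.
        e \<otimes>\<^bsub>R\<^esub> e = e \<and> u [^]\<^bsub>R\<^esub> n = \<one>\<^bsub>R\<^esub> \<and> r = e \<oplus>\<^bsub>R\<^esub> u)"

definition n_torsion_clean :: "('a, 'b) ring_scheme \<Rightarrow> nat \<Rightarrow> bool" where
  "n_torsion_clean R n \<longleftrightarrow>
     n \<ge> 1 \<and> clean_with_torsion R n \<and> (\<forall>n'. 1 \<le> n' \<and> n' < n \<longrightarrow> \<not> clean_with_torsion R n')"

end

theory Submission
  imports Defs
begin

text \<open>Every square matrix A over F_2 is nil-clean: A = E + N with E idempotent and N^m = 0.
  Nil-cleanness is invariant under similarity and passes to block triangular matrices. Conjugating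
  by involutive transvections, A becomes similar to a matrix whose first columns are
  e(1), ..., e(j) and whose column j vanishes below row j; such a matrix is block upper
  triangular with a companion matrix as upper left block, and companion matrices over F_2 are
  decomposed explicitly. Applied to r + 1 = E + N this gives r = E + (1 + N), where in
  characteristic 2 the unit 1 + N satisfies (1 + N)^(2^k) = 1 + N^(2^k) = 1 as soon as m \<le> 2^k.\<close>

definition nil_clean_mat :: "nat \<Rightarrow> 'a :: semiring_1 mat \<Rightarrow> bool" where
  "nil_clean_mat n A \<longleftrightarrow> (\<exists>E N. E \<in> carrier_mat n n \<and> N \<in> carrier_mat n n \<and> E * E = E
     \<and> N ^\<^sub>m n = 0\<^sub>m n n \<and> A = E + N)"

lemma nil_clean_matI:
  assumes "E \<in> carrier_mat n n" "N \<in> carrier_mat n n" "E * E = E" "N ^\<^sub>m n = 0\<^sub>m n n" "A = E + N"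
  shows "nil_clean_mat n A"
  using assms unfolding nil_clean_mat_def by blast

lemma nil_clean_matE:
  assumes "nil_clean_mat n A"
  obtains E N where "E \<in> carrier_mat n n" "N \<in> carrier_mat n n" "E * E = E"
    "N ^\<^sub>m n = 0\<^sub>m n n" "A = E + N"
  using assms unfolding nil_clean_mat_def by blast

lemma nil_clean_mat_carrier: "nil_clean_mat n A \<Longrightarrow> A \<in> carrier_mat n n"
  by (elim nil_clean_matE) simp

lemma nil_clean_mat_zero: "nil_clean_mat n (0\<^sub>m n n :: 'a :: semiring_1 mat)"
proof (rule nil_clean_matI[of "0\<^sub>m n n" n "0\<^sub>m n n"])
  show "(0\<^sub>m n n :: 'a mat) ^\<^sub>m n = 0\<^sub>m n n"
  proof (cases n)
    case (Suc m)
    then show ?thesis using right_mult_zero_mat[OF pow_carrier_mat[OF zero_carrier_mat[of n n]], of m n]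
      by simp
  qed (simp add: mat_eq_iff)
qed auto

lemma pow_mat_add:
  assumes "(A :: 'a :: semiring_1 mat) \<in> carrier_mat n n"
  shows "A ^\<^sub>m (i + j) = A ^\<^sub>m i * A ^\<^sub>m j"
proof -
  let ?R = "ring_mat TYPE('a) n ()"
  interpret semiring ?R by (rule semiring_mat)
  have "A ^\<^sub>m (i + j) = A [^]\<^bsub>?R\<^esub> (i + j)"
    by (rule pow_mat_ring_pow[OF assms])
  also have "\<dots> = A [^]\<^bsub>?R\<^esub> i \<otimes>\<^bsub>?R\<^esub> A [^]\<^bsub>?R\<^esub> j"
    by (rule nat_pow_mult[symmetric]) (use assms in \<open>simp add: ring_mat_simps\<close>)
  finally show ?thesis
    using assms by (simp add: pow_mat_ring_pow[symmetric] ring_mat_simps)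
qed

lemma nil_clean_mat_similar:
  fixes A B :: "'a :: semiring_1 mat"
  assumes sim: "similar_mat A B" and B: "nil_clean_mat n B"
  shows "nil_clean_mat n A"
proof -
  obtain E N where E: "E \<in> carrier_mat n n" and N: "N \<in> carrier_mat n n"
    and idem: "E * E = E" and nilp: "N ^\<^sub>m n = 0\<^sub>m n n" and B_eq: "B = E + N"
    using B by (rule nil_clean_matE)
  obtain P Q where wit: "similar_mat_wit A B P Q"
    using sim unfolding similar_mat_def by blast
  have "B \<in> carrier_mat n n" using B_eq E N by simp
  then have A: "A \<in> carrier_mat n n"
    using similar_mat_witD2(5)[OF _ similar_mat_wit_sym[OF wit]] by blast
  note wit_facts = similar_mat_witD2[OF A wit]
  have P: "P \<in> carrier_mat n n" and Q: "Q \<in> carrier_mat n n"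
    and PQ: "P * Q = 1\<^sub>m n" and QP: "Q * P = 1\<^sub>m n" and A_eq: "A = P * B * Q"
    using wit_facts by auto
  have "(P * E * Q) * (P * E * Q) = P * (E * (Q * P) * E) * Q"
    using P Q E by (simp add: assoc_mult_mat[of _ n n _ n _ n])
  then have "(P * E * Q) * (P * E * Q) = P * E * Q"
    using E QP idem by simp
  moreover have "(P * N * Q) ^\<^sub>m n = P * N ^\<^sub>m n * Q"
    by (rule similar_mat_wit_pow_id, rule similar_mat_witI[OF PQ QP refl], use P Q N in auto)
  moreover have "A = P * E * Q + P * N * Q"
    unfolding A_eq B_eq using P Q E N
    by (simp add: mult_add_distrib_mat[of _ n n] add_mult_distrib_mat[of _ n n])
  ultimately show ?thesis
    using P Q E N nilp by (intro nil_clean_matI[of "P * E * Q" _ "P * N * Q"]) auto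
qed

lemma pow_four_block_mat_upper:
  fixes A :: "'a :: semiring_1 mat"
  assumes A: "A \<in> carrier_mat a a" and B: "B \<in> carrier_mat a b" and D: "D \<in> carrier_mat b b"
  shows "\<exists>C \<in> carrier_mat a b.
    four_block_mat A B (0\<^sub>m b a) D ^\<^sub>m k = four_block_mat (A ^\<^sub>m k) C (0\<^sub>m b a) (D ^\<^sub>m k)"
proof (induct k)
  case 0
  show ?case using A D by (intro bexI[of _ "0\<^sub>m a b"]) auto
next
  case (Suc k)
  then obtain C where C: "C \<in> carrier_mat a b" and pow_k:
    "four_block_mat A B (0\<^sub>m b a) D ^\<^sub>m k = four_block_mat (A ^\<^sub>m k) C (0\<^sub>m b a) (D ^\<^sub>m k)"
    by blast
  have "four_block_mat A B (0\<^sub>m b a) D ^\<^sub>m Suc k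
      = four_block_mat (A ^\<^sub>m k) C (0\<^sub>m b a) (D ^\<^sub>m k) * four_block_mat A B (0\<^sub>m b a) D"
    using pow_k by simp
  also have "\<dots> = four_block_mat (A ^\<^sub>m k * A + C * 0\<^sub>m b a) (A ^\<^sub>m k * B + C * D)
      (0\<^sub>m b a * A + D ^\<^sub>m k * 0\<^sub>m b a) (0\<^sub>m b a * B + D ^\<^sub>m k * D)"
    by (rule mult_four_block_mat) (use A B C D in auto)
  also have "\<dots> = four_block_mat (A ^\<^sub>m Suc k) (A ^\<^sub>m k * B + C * D) (0\<^sub>m b a) (D ^\<^sub>m Suc k)"
    using A B C D mult_carrier_mat[OF pow_carrier_mat[OF A] A] mult_carrier_mat[OF pow_carrier_mat[OF D] D]
    by simp
  finally show ?case using A B C D by (intro bexI[of _ "A ^\<^sub>m k * B + C * D"]) auto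
qed

lemma nil_clean_mat_four_block_upper:
  fixes A :: "'a :: semiring_1 mat"
  assumes A: "nil_clean_mat a A" and D: "nil_clean_mat b D" and B: "B \<in> carrier_mat a b"
  shows "nil_clean_mat (a + b) (four_block_mat A B (0\<^sub>m b a) D)"
proof -
  obtain E1 N1 where E1: "E1 \<in> carrier_mat a a" and N1: "N1 \<in> carrier_mat a a"
    and idem1: "E1 * E1 = E1" and nilp1: "N1 ^\<^sub>m a = 0\<^sub>m a a" and A_eq: "A = E1 + N1"
    using A by (rule nil_clean_matE)
  obtain E2 N2 where E2: "E2 \<in> carrier_mat b b" and N2: "N2 \<in> carrier_mat b b"
    and idem2: "E2 * E2 = E2" and nilp2: "N2 ^\<^sub>m b = 0\<^sub>m b b" and D_eq: "D = E2 + N2"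
    using D by (rule nil_clean_matE)
  let ?E = "four_block_mat E1 (0\<^sub>m a b) (0\<^sub>m b a) E2"
  let ?N = "four_block_mat N1 B (0\<^sub>m b a) N2"
  have N: "?N \<in> carrier_mat (a + b) (a + b)" using N1 N2 B by auto
  have "?E * ?E = four_block_mat (E1 * E1 + 0\<^sub>m a b * 0\<^sub>m b a) (E1 * 0\<^sub>m a b + 0\<^sub>m a b * E2)
      (0\<^sub>m b a * E1 + E2 * 0\<^sub>m b a) (0\<^sub>m b a * 0\<^sub>m a b + E2 * E2)"
    by (rule mult_four_block_mat) (use E1 E2 in auto)
  then have idem: "?E * ?E = ?E" using E1 E2 idem1 idem2 by simp
  obtain C1 where C1: "C1 \<in> carrier_mat a b"
    and pow_a: "?N ^\<^sub>m a = four_block_mat (0\<^sub>m a a) C1 (0\<^sub>m b a) (N2 ^\<^sub>m a)"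
    using pow_four_block_mat_upper[OF N1 B N2, of a] nilp1 by auto
  obtain C2 where C2: "C2 \<in> carrier_mat a b"
    and pow_b: "?N ^\<^sub>m b = four_block_mat (N1 ^\<^sub>m b) C2 (0\<^sub>m b a) (0\<^sub>m b b)"
    using pow_four_block_mat_upper[OF N1 B N2, of b] nilp2 by auto
  have "?N ^\<^sub>m (a + b) = ?N ^\<^sub>m a * ?N ^\<^sub>m b" by (rule pow_mat_add[OF N])
  also have "\<dots> = four_block_mat (0\<^sub>m a a * N1 ^\<^sub>m b + C1 * 0\<^sub>m b a) (0\<^sub>m a a * C2 + C1 * 0\<^sub>m b b)
      (0\<^sub>m b a * N1 ^\<^sub>m b + N2 ^\<^sub>m a * 0\<^sub>m b a) (0\<^sub>m b a * C2 + N2 ^\<^sub>m a * 0\<^sub>m b b)"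
    unfolding pow_a pow_b by (rule mult_four_block_mat) (use N1 N2 C1 C2 in auto)
  also have "\<dots> = 0\<^sub>m (a + b) (a + b)" using N1 N2 C1 C2 by simp
  finally have nilp: "?N ^\<^sub>m (a + b) = 0\<^sub>m (a + b) (a + b)" .
  have "four_block_mat A B (0\<^sub>m b a) D = ?E + ?N"
    unfolding A_eq D_eq by (subst add_four_block_mat[of _ a a _ b _ b]) (use E1 E2 N1 N2 B in auto)
  then show ?thesis using E1 E2 N idem nilp by (intro nil_clean_matI[of ?E _ ?N]) auto
qed

lemma transpose_pow_mat:
  assumes A: "(A :: 'a :: comm_semiring_1 mat) \<in> carrier_mat n n"
  shows "transpose_mat (A ^\<^sub>m k) = transpose_mat A ^\<^sub>m k"
proof (induct k)
  case (Suc k)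
  have "A ^\<^sub>m Suc k = A * A ^\<^sub>m k" using pow_mat_add[OF A, of 1 k] A by simp
  then show ?case using Suc by (simp add: transpose_mult[OF A pow_carrier_mat[OF A]])
qed (use A in simp)

lemma nil_clean_mat_transpose:
  fixes A :: "'a :: comm_semiring_1 mat"
  assumes "nil_clean_mat n A"
  shows "nil_clean_mat n (transpose_mat A)"
proof -
  obtain E N where E: "E \<in> carrier_mat n n" and N: "N \<in> carrier_mat n n"
    and idem: "E * E = E" and nilp: "N ^\<^sub>m n = 0\<^sub>m n n" and A_eq: "A = E + N"
    using assms by (rule nil_clean_matE)
  have "transpose_mat E * transpose_mat E = transpose_mat E"
    using E idem transpose_mult[OF E E] by simp
  moreover have "transpose_mat N ^\<^sub>m n = 0\<^sub>m n n"
    using transpose_pow_mat[OF N, of n] nilp by simp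
  ultimately show ?thesis
    using E N unfolding A_eq by (intro nil_clean_matI) (auto simp: transpose_add)
qed

lemma nil_clean_mat_four_block_lower:
  fixes A :: "'a :: comm_semiring_1 mat"
  assumes A: "nil_clean_mat a A" and D: "nil_clean_mat b D" and C: "C \<in> carrier_mat b a"
  shows "nil_clean_mat (a + b) (four_block_mat A (0\<^sub>m a b) C D)"
proof -
  have "nil_clean_mat (a + b)
      (four_block_mat (transpose_mat A) (transpose_mat C) (0\<^sub>m b a) (transpose_mat D))"
    using A D C by (intro nil_clean_mat_four_block_upper nil_clean_mat_transpose) auto
  from nil_clean_mat_transpose[OF this] show ?thesis
    using nil_clean_mat_carrier[OF A] nil_clean_mat_carrier[OF D] C
    by (simp add: transpose_four_block_mat[of _ a a _ b _ b])
qed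

lemma mult_unit_vec_eq_col:
  assumes "(A :: 'a :: semiring_1 mat) \<in> carrier_mat n m" and "j < m"
  shows "A *\<^sub>v unit_vec m j = col A j"
  using assms by (intro eq_vecI) auto

lemma eq_mat_if_mult_unit_vecs_eq:
  fixes A B :: "'a :: semiring_1 mat"
  assumes A: "A \<in> carrier_mat n m" and B: "B \<in> carrier_mat n m"
    and eq: "\<And>j. j < m \<Longrightarrow> A *\<^sub>v unit_vec m j = B *\<^sub>v unit_vec m j"
  shows "A = B"
proof (rule eq_matI)
  fix i j assume i: "i < dim_row B" and j: "j < dim_col B"
  then have "col A j = col B j"
    using eq[of j] A B by (simp add: mult_unit_vec_eq_col[OF A] mult_unit_vec_eq_col[OF B])
  then have "col A j $ i = col B j $ i" by simp
  then show "A $$ (i, j) = B $$ (i, j)" using i j A B by simp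
qed (use A B in auto)

lemma pow_mat_mult_vec_chain:
  fixes N :: "'a :: semiring_1 mat"
  assumes N: "N \<in> carrier_mat d d" and w: "\<And>j. j < d \<Longrightarrow> w j \<in> carrier_vec d"
    and step: "\<And>j. Suc j < d \<Longrightarrow> N *\<^sub>v w j = w (Suc j)"
    and last: "N *\<^sub>v w (d - 1) = 0\<^sub>v d"
    and j: "j < d"
  shows "N ^\<^sub>m k *\<^sub>v w j = (if j + k < d then w (j + k) else 0\<^sub>v d)"
  using j
proof (induct k arbitrary: j)
  case 0
  then show ?case using w N by simp
next
  case (Suc k)
  have "N ^\<^sub>m Suc k *\<^sub>v w j = N ^\<^sub>m k *\<^sub>v (N *\<^sub>v w j)"
    using N w[OF Suc.prems] by (simp add: assoc_mult_mat_vec[of _ d d _ d])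
  also have "\<dots> = (if j + Suc k < d then w (j + Suc k) else 0\<^sub>v d)"
  proof (cases "Suc j < d")
    case True
    then show ?thesis using step Suc.hyps[of "Suc j"] by simp
  next
    case False
    then have "j = d - 1" using Suc.prems by simp
    then have "N *\<^sub>v w j = 0\<^sub>v d" using last by simp
    then show ?thesis using False N by auto
  qed
  finally show ?case .
qed

lemma sum_atLeastLessThan_two:
  fixes f :: "nat \<Rightarrow> 'a :: comm_monoid_add"
  assumes "p < d" "q < d" "p \<noteq> q" and "\<And>c. c < d \<Longrightarrow> c \<noteq> p \<Longrightarrow> c \<noteq> q \<Longrightarrow> f c = 0"
  shows "(\<Sum>c \<in> {0..<d}. f c) = f p + f q"
proof -
  have "(\<Sum>c \<in> {0..<d}. f c) = (\<Sum>c \<in> {p, q}. f c)"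
    by (rule sum.mono_neutral_right) (use assms in auto)
  then show ?thesis using assms(3) by simp
qed

definition rank_one_mat :: "'a :: times vec \<Rightarrow> 'a vec \<Rightarrow> 'a mat" where
  "rank_one_mat u v = mat (dim_vec u) (dim_vec v) (\<lambda>(i, j). u $ i * v $ j)"

lemma rank_one_mat_carrier [simp]:
  "u \<in> carrier_vec n \<Longrightarrow> v \<in> carrier_vec m \<Longrightarrow> rank_one_mat u v \<in> carrier_mat n m"
  by (simp add: rank_one_mat_def)

lemma rank_one_mat_mult_vec:
  fixes u v z :: "'a :: comm_semiring_1 vec"
  assumes "u \<in> carrier_vec n" and "v \<in> carrier_vec m" and "z \<in> carrier_vec m"
  shows "rank_one_mat u v *\<^sub>v z = (v \<bullet> z) \<cdot>\<^sub>v u"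
  using assms
  by (intro eq_vecI) (auto simp: rank_one_mat_def scalar_prod_def sum_distrib_left ac_simps)

lemma rank_one_mat_idem:
  fixes u v :: "'a :: comm_semiring_1 vec"
  assumes u: "u \<in> carrier_vec n" and v: "v \<in> carrier_vec n" and vu: "v \<bullet> u = 1"
  shows "rank_one_mat u v * rank_one_mat u v = rank_one_mat u v"
proof (rule eq_mat_if_mult_unit_vecs_eq)
  have R: "rank_one_mat u v \<in> carrier_mat n n" using u v by simp
  fix j assume "j < n"
  then show "rank_one_mat u v * rank_one_mat u v *\<^sub>v unit_vec n j = rank_one_mat u v *\<^sub>v unit_vec n j"
    using u v vu by (simp add: assoc_mult_mat_vec[OF R R] rank_one_mat_mult_vec[OF u v])
qed (use u v in \<open>auto intro: mult_carrier_mat[of _ n n]\<close>)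

text \<open>The companion matrix of t^d - x(d-1) t^(d-1) - ... - x(0).\<close>
definition companion_mat :: "nat \<Rightarrow> 'a :: zero_neq_one vec \<Rightarrow> 'a mat" where
  "companion_mat d x = mat d d (\<lambda>(i, j). if Suc j < d then (if i = Suc j then 1 else 0) else x $ i)"

lemma companion_mat_carrier [simp]: "companion_mat d x \<in> carrier_mat d d"
  by (simp add: companion_mat_def)

lemma companion_mat_zero_nilpotent:
  "(companion_mat d (0\<^sub>v d) :: 'a :: semiring_1 mat) ^\<^sub>m d = 0\<^sub>m d d"
proof (rule eq_mat_if_mult_unit_vecs_eq)
  let ?S = "companion_mat d (0\<^sub>v d) :: 'a mat"
  have "?S *\<^sub>v unit_vec d j = (if Suc j < d then unit_vec d (Suc j) else 0\<^sub>v d)" if "j < d" for j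
    using that by (intro eq_vecI) (auto simp: mult_unit_vec_eq_col companion_mat_def)
  then show "?S ^\<^sub>m d *\<^sub>v unit_vec d j = 0\<^sub>m d d *\<^sub>v unit_vec d j" if "j < d" for j
    using that by (subst pow_mat_mult_vec_chain[where w = "unit_vec d"]) auto
qed auto

lemma nil_clean_companion_mat_last_one:
  fixes x :: "'a :: comm_semiring_1 vec"
  assumes x: "x \<in> carrier_vec d" and d: "0 < d" and last: "x $ (d - 1) = 1"
  shows "nil_clean_mat d (companion_mat d x)"
proof (rule nil_clean_matI)
  let ?e = "unit_vec d (d - 1) :: 'a vec"
  show "rank_one_mat x ?e * rank_one_mat x ?e = rank_one_mat x ?e"
    by (rule rank_one_mat_idem[of _ d]) (use x d last in auto)
  show "companion_mat d x = rank_one_mat x ?e + companion_mat d (0\<^sub>v d)"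
    using x by (intro eq_matI) (auto simp: companion_mat_def rank_one_mat_def)
qed (use x companion_mat_zero_nilpotent in auto)

lemma companion_mat_first_zero:
  fixes x :: "'a :: zero_neq_one vec"
  assumes d: "0 < d" and first: "x $ 0 = 0"
  shows "companion_mat (1 + d) x = four_block_mat (0\<^sub>m 1 1) (0\<^sub>m 1 d)
    (mat d 1 (\<lambda>(i, j). if i = 0 then 1 else 0)) (companion_mat d (vec d (\<lambda>i. x $ Suc i)))"
  (is "_ = ?B")
proof (rule eq_matI)
  fix i j assume "i < dim_row ?B" "j < dim_col ?B"
  then have "i < Suc d" "j < Suc d" by (auto simp: companion_mat_def)
  then show "companion_mat (1 + d) x $$ (i, j) = ?B $$ (i, j)"
    using d first by (cases i; cases j; auto simp: companion_mat_def)
qed (auto simp: companion_mat_def)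

definition shift_prefix :: "nat \<Rightarrow> nat \<Rightarrow> 'a :: zero_neq_one mat \<Rightarrow> bool" where
  "shift_prefix n j A \<longleftrightarrow> (\<forall>i < j. col A i = unit_vec n (Suc i))"

lemma similar_mat_involution:
  fixes A P :: "'a :: semiring_1 mat"
  assumes A: "A \<in> carrier_mat n n" and P: "P \<in> carrier_mat n n" and PP: "P * P = 1\<^sub>m n"
  shows "similar_mat A (P * A * P)"
proof (rule similar_matI[of A "P * A * P" P P n])
  have "P * (P * A * P) * P = (P * P) * A * (P * P)"
    using A P by (simp add: assoc_mult_mat[of _ n n _ n _ n])
  then show "A = P * (P * A * P) * P" using A PP by simp
qed (use A P PP in auto)

lemma shift_prefix_conj:
  fixes A P :: "'a :: semiring_1 mat"
  assumes A: "A \<in> carrier_mat n n" and P: "P \<in> carrier_mat n n" and j: "j < n"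
    and fix_units: "\<And>i. i \<le> j \<Longrightarrow> P *\<^sub>v unit_vec n i = unit_vec n i"
    and sp: "shift_prefix n j A"
  shows "shift_prefix n j (P * A * P)" and "col (P * A * P) j = P *\<^sub>v col A j"
proof -
  have col: "col (P * A * P) i = P *\<^sub>v col A i" if i: "i \<le> j" for i
  proof -
    have "col (P * A * P) i = P *\<^sub>v (A *\<^sub>v (P *\<^sub>v unit_vec n i))"
      using A P i j by (simp add: mult_unit_vec_eq_col[symmetric, of _ n n] assoc_mult_mat_vec[of _ n n _ n])
    also have "\<dots> = P *\<^sub>v col A i"
      using A i j fix_units by (simp add: mult_unit_vec_eq_col)
    finally show ?thesis .
  qed
  then show "col (P * A * P) j = P *\<^sub>v col A j" by simp
  show "shift_prefix n j (P * A * P)"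
    using sp col fix_units unfolding shift_prefix_def by simp
qed

lemma four_block_companion_if_shift_prefix:
  fixes A :: "'a :: zero_neq_one mat"
  assumes A: "A \<in> carrier_mat n n" and j: "j < n" and sp: "shift_prefix n j A"
    and below: "\<And>i. j < i \<Longrightarrow> i < n \<Longrightarrow> A $$ (i, j) = 0"
  shows "A = four_block_mat (companion_mat (Suc j) (vec (Suc j) (\<lambda>i. A $$ (i, j))))
    (mat (Suc j) (n - Suc j) (\<lambda>(i, l). A $$ (i, l + Suc j))) (0\<^sub>m (n - Suc j) (Suc j))
    (mat (n - Suc j) (n - Suc j) (\<lambda>(i, l). A $$ (i + Suc j, l + Suc j)))"
  (is "A = ?B")
proof (rule eq_matI)
  have dims: "dim_row ?B = n" "dim_col ?B = n"
    using j by (simp_all add: carrier_matD[OF companion_mat_carrier])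
  then show "dim_row A = dim_row ?B" "dim_col A = dim_col ?B" using A by simp_all
  fix i l assume "i < dim_row ?B" "l < dim_col ?B"
  then have i: "i < n" and l: "l < n" using dims by simp_all
  have B_index: "?B $$ (i, l) = (if i < Suc j then
      if l < Suc j then companion_mat (Suc j) (vec (Suc j) (\<lambda>i. A $$ (i, j))) $$ (i, l)
      else A $$ (i, l) else if l < Suc j then 0 else A $$ (i, l))"
    using i l j by (simp add: carrier_matD[OF companion_mat_carrier])
  consider "l < j" | "l = j" | "j < l" by linarith
  then show "A $$ (i, l) = ?B $$ (i, l)"
  proof cases
    case 1
    then have "A $$ (i, l) = col A l $ i" using A i l by simp
    also have "\<dots> = (if i = Suc l then 1 else 0)"
      using 1 sp i unfolding shift_prefix_def by (simp add: unit_vec_def)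
    finally show ?thesis using 1 B_index by (simp add: companion_mat_def)
  next
    case 2
    then show ?thesis using B_index below i by (simp add: companion_mat_def)
  qed (use B_index in simp)
qed

text \<open>Keeps sums over bit from being rewritten into cardinalities of sets.\<close>
declare add_bit_eq_xor [simp del] mult_bit_eq_and [simp del]

definition prefix_ones_vec :: "nat \<Rightarrow> nat \<Rightarrow> 'a :: zero_neq_one vec" where
  "prefix_ones_vec d j = vec d (\<lambda>i. if i \<le> j then 1 else 0)"

lemma prefix_ones_vec_carrier [simp]: "prefix_ones_vec d j \<in> carrier_vec d"
  by (simp add: prefix_ones_vec_def)

text \<open>Its columns are e(0) + e(1), e(2), ..., e(d-1) and the all-ones vector, so it shifts the
  vectors prefix_ones_vec d j and, in characteristic 2, kills the last of them.\<close>
definition ones_shift_mat :: "nat \<Rightarrow> bit mat" where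
  "ones_shift_mat d = mat d d (\<lambda>(i, j). if Suc j = d then 1
     else if j = 0 then (if i \<le> 1 then 1 else 0) else if i = Suc j then 1 else 0)"

lemma ones_shift_mat_carrier [simp]: "ones_shift_mat d \<in> carrier_mat d d"
  by (simp add: ones_shift_mat_def)

lemma ones_shift_mat_mult_vec:
  assumes d: "2 \<le> d" and w: "w \<in> carrier_vec d" and i: "i < d"
  shows "(ones_shift_mat d *\<^sub>v w) $ i = w $ (if i \<le> 1 then 0 else i - 1) + w $ (d - 1)"
proof -
  let ?N = "ones_shift_mat d" and ?p = "if i \<le> 1 then 0 else i - 1"
  have "(?N *\<^sub>v w) $ i = (\<Sum>c \<in> {0..<d}. ?N $$ (i, c) * w $ c)"
    using i w carrier_matD[OF ones_shift_mat_carrier] by (simp add: scalar_prod_def)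
  also have "\<dots> = ?N $$ (i, ?p) * w $ ?p + ?N $$ (i, d - 1) * w $ (d - 1)"
    by (rule sum_atLeastLessThan_two) (use d i in \<open>auto simp: ones_shift_mat_def\<close>)
  also have "\<dots> = w $ ?p + w $ (d - 1)"
    using d i by (auto simp: ones_shift_mat_def)
  finally show ?thesis .
qed

lemma ones_shift_mat_nilpotent:
  assumes d: "2 \<le> d"
  shows "ones_shift_mat d ^\<^sub>m d = 0\<^sub>m d d"
proof -
  let ?N = "ones_shift_mat d" and ?u = "prefix_ones_vec d :: nat \<Rightarrow> bit vec"
  have shift: "?N *\<^sub>v ?u j = (if Suc j < d then ?u (Suc j) else 0\<^sub>v d)" if j: "j < d" for j
  proof (rule eq_vecI)
    fix i assume "i < dim_vec (if Suc j < d then ?u (Suc j) else 0\<^sub>v d)"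
    then have i: "i < d" by (simp add: prefix_ones_vec_def split: if_splits)
    show "(?N *\<^sub>v ?u j) $ i = (if Suc j < d then ?u (Suc j) else 0\<^sub>v d) $ i"
      unfolding ones_shift_mat_mult_vec[OF d prefix_ones_vec_carrier i]
      using i j d by (auto simp: prefix_ones_vec_def)
  qed (simp add: prefix_ones_vec_def ones_shift_mat_def)
  have kill: "?N ^\<^sub>m d *\<^sub>v ?u j = 0\<^sub>v d" if "j < d" for j
    using that shift by (subst pow_mat_mult_vec_chain[where w = ?u]) auto
  show ?thesis
  proof (rule eq_mat_if_mult_unit_vecs_eq)
    fix j assume j: "j < d"
    have "?N ^\<^sub>m d *\<^sub>v unit_vec d j = 0\<^sub>v d"
    proof (cases j)
      case 0
      then have "unit_vec d j = ?u 0" by (intro eq_vecI) (auto simp: prefix_ones_vec_def)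
      then show ?thesis using kill j by simp
    next
      case (Suc i)
      then have "unit_vec d j = ?u j + ?u i"
        by (intro eq_vecI) (auto simp: prefix_ones_vec_def unit_vec_def)
      then show ?thesis using kill[of j] kill[of i] j Suc
        by (simp add: mult_add_distrib_mat_vec[of _ d d])
    qed
    moreover have "0\<^sub>m d d *\<^sub>v unit_vec d j = (0\<^sub>v d :: bit vec)" by (intro eq_vecI) auto
    ultimately show "?N ^\<^sub>m d *\<^sub>v unit_vec d j = 0\<^sub>m d d *\<^sub>v unit_vec d j" by simp
  qed auto
qed

lemma nil_clean_companion_mat_first_one:
  fixes x :: "bit vec"
  assumes x: "x \<in> carrier_vec d" and d: "2 \<le> d" and first: "x $ 0 = 1" and last: "x $ (d - 1) = 0"
  shows "nil_clean_mat d (companion_mat d x)"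
proof -
  txt \<open>E has columns e(0), 0, ..., 0, y with y(0) = 0 and y(d-1) = 1, which makes it idempotent;
    the other entries of y are chosen so that the companion matrix minus E is ones_shift_mat d.\<close>
  define y where "y i = (if i = 0 then 0 else if Suc i = d then 1 else x $ i + 1)" for i
  define E :: "bit mat" where
    "E = mat d d (\<lambda>(i, j). if j = 0 then (if i = 0 then 1 else 0) else if Suc j = d then y i else 0)"
  have E: "E \<in> carrier_mat d d" by (simp add: E_def)
  have "E * E = E"
  proof (rule eq_matI)
    fix i j assume "i < dim_row E" "j < dim_col E"
    then have i: "i < d" and j: "j < d" by (auto simp: E_def)
    have "(E * E) $$ (i, j) = (\<Sum>c \<in> {0..<d}. E $$ (i, c) * E $$ (c, j))"
      using i j E by (simp add: scalar_prod_def)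
    also have "\<dots> = E $$ (i, 0) * E $$ (0, j) + E $$ (i, d - 1) * E $$ (d - 1, j)"
      by (rule sum_atLeastLessThan_two) (use d i j in \<open>auto simp: E_def\<close>)
    also have "\<dots> = E $$ (i, j)" using d i j by (auto simp: E_def y_def)
    finally show "(E * E) $$ (i, j) = E $$ (i, j)" .
  qed (auto simp: E_def)
  moreover have "companion_mat d x = E + ones_shift_mat d"
  proof (rule eq_matI)
    fix i j assume "i < dim_row (E + ones_shift_mat d)" "j < dim_col (E + ones_shift_mat d)"
    then have i: "i < d" and j: "j < d" by (auto simp: ones_shift_mat_def)
    have "Suc i = d \<Longrightarrow> x $ i = 0" using last by (metis diff_Suc_1)
    then show "companion_mat d x $$ (i, j) = (E + ones_shift_mat d) $$ (i, j)"
      using i j d first by (auto simp: E_def ones_shift_mat_def companion_mat_def y_def)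
  qed (auto simp: E_def companion_mat_def ones_shift_mat_def)
  ultimately show ?thesis
    using E ones_shift_mat_nilpotent[OF d] by (intro nil_clean_matI[of E d "ones_shift_mat d"]) auto
qed

lemma nil_clean_companion_mat:
  fixes x :: "bit vec"
  assumes "x \<in> carrier_vec d" and "0 < d"
  shows "nil_clean_mat d (companion_mat d x)"
  using assms
proof (induction d arbitrary: x)
  case (Suc d)
  consider "x $ d = 1" | "x $ d = 0" "x $ 0 = 1" | "x $ d = 0" "x $ 0 = 0"
    by (metis bit_not_one_iff)
  then show ?case
  proof cases
    case 1
    then show ?thesis using Suc.prems by (intro nil_clean_companion_mat_last_one) auto
  next
    case 2
    then have "d \<noteq> 0" by (cases d) auto
    then show ?thesis using 2 Suc.prems by (intro nil_clean_companion_mat_first_one) auto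
  next
    case 3
    show ?thesis
    proof (cases "d = 0")
      case True
      then have "companion_mat (Suc d) x = 0\<^sub>m 1 1"
        using 3 by (intro eq_matI) (auto simp: companion_mat_def)
      then show ?thesis using True nil_clean_mat_zero by simp
    next
      case False
      then have "nil_clean_mat (1 + d) (four_block_mat (0\<^sub>m 1 1) (0\<^sub>m 1 d)
          (mat d 1 (\<lambda>(i, j). if i = 0 then 1 else 0)) (companion_mat d (vec d (\<lambda>i. x $ Suc i))))"
        by (intro nil_clean_mat_four_block_lower nil_clean_mat_zero Suc.IH) auto
      then show ?thesis
        using companion_mat_first_zero[of d x] 3 False by simp
    qed
  qed
qed simp

lemma transvection_involution:
  fixes v w w' :: "bit vec"
  assumes v: "v \<in> carrier_vec n" and w: "w \<in> carrier_vec n" and w': "w' \<in> carrier_vec n"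
    and vw: "v \<bullet> w = 1" and vw': "v \<bullet> w' = 1"
  obtains P where "P \<in> carrier_mat n n" "P * P = 1\<^sub>m n" "P *\<^sub>v w = w'"
    "\<And>z. z \<in> carrier_vec n \<Longrightarrow> v \<bullet> z = 0 \<Longrightarrow> P *\<^sub>v z = z"
proof -
  define u where "u = w + w'"
  define P where "P = 1\<^sub>m n + rank_one_mat u v"
  have u: "u \<in> carrier_vec n" using w w' by (simp add: u_def)
  have P: "P \<in> carrier_mat n n" using u v by (simp add: P_def)
  have P_mult: "P *\<^sub>v z = z + (v \<bullet> z) \<cdot>\<^sub>v u" if z: "z \<in> carrier_vec n" for z
    using u v z by (simp add: P_def add_mult_distrib_mat_vec[of _ n n] rank_one_mat_mult_vec)
  have vu: "v \<bullet> u = 0"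
    using v w w' vw vw' by (simp add: u_def scalar_prod_add_distrib[of v n])
  have "P *\<^sub>v w = w'"
    using w w' vw by (intro eq_vecI) (auto simp: P_mult u_def)
  moreover have "P * P = 1\<^sub>m n"
  proof (rule eq_mat_if_mult_unit_vecs_eq)
    fix j assume "j < n"
    let ?c = "v \<bullet> unit_vec n j"
    have "v \<bullet> (unit_vec n j + ?c \<cdot>\<^sub>v u) = ?c"
      using u v vu by (simp add: scalar_prod_add_distrib[of v n])
    then show "P * P *\<^sub>v unit_vec n j = 1\<^sub>m n *\<^sub>v unit_vec n j"
      using P u by (intro eq_vecI) (auto simp: P_mult)
  qed (use P in \<open>auto intro: mult_carrier_mat[of _ n n]\<close>)
  moreover have "P *\<^sub>v z = z" if "z \<in> carrier_vec n" "v \<bullet> z = 0" for z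
    using that u by (intro eq_vecI) (auto simp: P_mult)
  ultimately show ?thesis using P by (intro that) auto
qed

text \<open>Conjugating by two involutions that fix e(0), ..., e(j): the first turns column j into
  its part X on and above the diagonal plus e(j+1), the second removes X.\<close>
lemma similar_shift_prefix_Suc:
  fixes A :: "bit mat"
  assumes A: "A \<in> carrier_mat n n" and sp: "shift_prefix n j A"
    and k: "j < k" "k < n" "A $$ (k, j) = 1"
  obtains A' where "A' \<in> carrier_mat n n" "similar_mat A A'" "shift_prefix n (Suc j) A'"
proof -
  have jn: "Suc j < n" using k(1,2) by simp
  define X :: "bit vec" where "X = vec n (\<lambda>i. if i \<le> j then A $$ (i, j) else 0)"
  define e :: "bit vec" where "e = unit_vec n (Suc j)"
  define v :: "bit vec" where "v = e + (if A $$ (Suc j, j) = 1 then 0\<^sub>v n else unit_vec n k)"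
  have X: "X \<in> carrier_vec n" and e: "e \<in> carrier_vec n" and v: "v \<in> carrier_vec n"
    by (simp_all add: X_def e_def v_def)
  have Xe: "X + e \<in> carrier_vec n" using X e by simp
  have colj: "col A j \<in> carrier_vec n" using A by (metis col_dim carrier_matD(1))
  have v_dot: "v \<bullet> z = z $ Suc j + (if A $$ (Suc j, j) = 1 then 0 else z $ k)"
    if "z \<in> carrier_vec n" for z
    using that jn k e by (simp add: v_def e_def add_scalar_prod_distrib[of _ n])
  have e_dot: "e \<bullet> z = z $ Suc j" if "z \<in> carrier_vec n" for z
    using that jn by (simp add: e_def)
  have Xe_index: "(X + e) $ i = (if i \<le> j then A $$ (i, j) else if i = Suc j then 1 else 0)"
    if "i < n" for i
    using that by (auto simp: X_def e_def unit_vec_def)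
  have "v \<bullet> col A j = 1"
    using A jn k by (cases "A $$ (Suc j, j)") (simp_all add: v_dot[OF colj])
  moreover have "v \<bullet> (X + e) = 1"
    using jn k by (auto simp: v_dot[OF Xe] Xe_index)
  ultimately obtain P1 where P1: "P1 \<in> carrier_mat n n" "P1 * P1 = 1\<^sub>m n"
    and P1_col: "P1 *\<^sub>v col A j = X + e"
    and P1_fix: "\<And>z. z \<in> carrier_vec n \<Longrightarrow> v \<bullet> z = 0 \<Longrightarrow> P1 *\<^sub>v z = z"
    using transvection_involution[OF v colj Xe] by blast
  have "e \<bullet> (X + e) = 1" using jn by (simp add: e_dot[OF Xe] Xe_index)
  moreover have "e \<bullet> e = 1" unfolding e_dot[OF e] using jn by (simp add: e_def)
  ultimately obtain P2 where P2: "P2 \<in> carrier_mat n n" "P2 * P2 = 1\<^sub>m n"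
    and P2_col: "P2 *\<^sub>v (X + e) = e"
    and P2_fix: "\<And>z. z \<in> carrier_vec n \<Longrightarrow> e \<bullet> z = 0 \<Longrightarrow> P2 *\<^sub>v z = z"
    using transvection_involution[OF e Xe e] by blast
  have fix_units: "P1 *\<^sub>v unit_vec n i = unit_vec n i" "P2 *\<^sub>v unit_vec n i = unit_vec n i"
    if "i \<le> j" for i
    using that jn k by (auto intro!: P1_fix P2_fix simp: v_def e_def)
  let ?A1 = "P1 * A * P1"
  let ?A2 = "P2 * ?A1 * P2"
  have A1: "?A1 \<in> carrier_mat n n" using A P1 by simp
  have "shift_prefix n j ?A1" and "col ?A1 j = X + e"
    using shift_prefix_conj[OF A P1(1) _ fix_units(1) sp] jn P1_col by auto
  then have "shift_prefix n j ?A2" and "col ?A2 j = e"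
    using shift_prefix_conj[OF A1 P2(1) _ fix_units(2)] jn P2_col by auto
  then have "shift_prefix n (Suc j) ?A2"
    unfolding shift_prefix_def e_def by (auto simp: less_Suc_eq)
  moreover have "similar_mat A ?A2"
    using similar_mat_involution[OF A P1(1,2)] similar_mat_involution[OF A1 P2(1,2)]
    by (rule similar_mat_trans)
  moreover have "?A2 \<in> carrier_mat n n" using A1 P2(1) by (meson mult_carrier_mat)
  ultimately show ?thesis using that by blast
qed

lemma nil_clean_mat_if_shift_prefix:
  fixes A :: "bit mat"
  assumes smaller: "\<And>m B. m < n \<Longrightarrow> B \<in> carrier_mat m m \<Longrightarrow> nil_clean_mat m (B :: bit mat)"
    and "A \<in> carrier_mat n n" and "j < n" and "shift_prefix n j A"
  shows "nil_clean_mat n A"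
  using assms(2-)
proof (induction "n - j" arbitrary: j A rule: less_induct)
  case less
  show ?case
  proof (cases "\<exists>k. j < k \<and> k < n \<and> A $$ (k, j) = 1")
    case True
    then obtain k where k: "j < k" "k < n" "A $$ (k, j) = 1" by blast
    obtain A' where A': "A' \<in> carrier_mat n n" "similar_mat A A'" "shift_prefix n (Suc j) A'"
      using similar_shift_prefix_Suc[OF less.prems(1,3) k] by blast
    have "nil_clean_mat n A'" by (rule less.hyps[of "Suc j"]) (use k A' in auto)
    then show ?thesis using A'(2) by (rule nil_clean_mat_similar[rotated])
  next
    case False
    then have below: "\<And>i. j < i \<Longrightarrow> i < n \<Longrightarrow> A $$ (i, j) = 0" by auto
    have "nil_clean_mat (Suc j + (n - Suc j)) (four_block_mat
        (companion_mat (Suc j) (vec (Suc j) (\<lambda>i. A $$ (i, j))))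
        (mat (Suc j) (n - Suc j) (\<lambda>(i, l). A $$ (i, l + Suc j))) (0\<^sub>m (n - Suc j) (Suc j))
        (mat (n - Suc j) (n - Suc j) (\<lambda>(i, l). A $$ (i + Suc j, l + Suc j))))"
      by (intro nil_clean_mat_four_block_upper nil_clean_companion_mat smaller) (use less.prems in auto)
    then show ?thesis
      using four_block_companion_if_shift_prefix[OF less.prems below] less.prems(2) by simp
  qed
qed

lemma nil_clean_mat_bit: "(A :: bit mat) \<in> carrier_mat n n \<Longrightarrow> nil_clean_mat n A"
proof (induction n arbitrary: A rule: less_induct)
  case (less n)
  show ?case
  proof (cases n)
    case 0
    then have "A = 0\<^sub>m n n" using less.prems by (intro eq_matI) auto
    then show ?thesis using nil_clean_mat_zero by simp
  next
    case (Suc m)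
    show ?thesis
      by (rule nil_clean_mat_if_shift_prefix[of n A 0])
        (use less Suc in \<open>auto simp: shift_prefix_def\<close>)
  qed
qed

lemma mat_add_self_bit: "(A :: bit mat) \<in> carrier_mat n m \<Longrightarrow> A + A = 0\<^sub>m n m"
  by (intro eq_matI) (auto simp: add_bit_eq_xor)

lemma one_plus_square_bit:
  assumes M: "(M :: bit mat) \<in> carrier_mat n n"
  shows "(1\<^sub>m n + M) * (1\<^sub>m n + M) = 1\<^sub>m n + M * M"
proof -
  have MM: "M * M \<in> carrier_mat n n" using M M by (rule mult_carrier_mat)
  have "(1\<^sub>m n + M) * (1\<^sub>m n + M) = (1\<^sub>m n + M) * 1\<^sub>m n + (1\<^sub>m n + M) * M"
    by (rule mult_add_distrib_mat) (use M in auto)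
  also have "(1\<^sub>m n + M) * M = 1\<^sub>m n * M + M * M"
    by (rule add_mult_distrib_mat) (use M in auto)
  also have "(1\<^sub>m n + M) * 1\<^sub>m n + (1\<^sub>m n * M + M * M) = (1\<^sub>m n + M) + (M + M * M)"
    using M by simp
  also have "\<dots> = 1\<^sub>m n + (M + M) + M * M"
    using M MM by (simp add: assoc_add_mat[of _ n n])
  also have "\<dots> = 1\<^sub>m n + M * M" using M MM by (simp add: mat_add_self_bit)
  finally show ?thesis .
qed

lemma one_plus_pow_two_pow:
  assumes N: "(N :: bit mat) \<in> carrier_mat n n"
  shows "(1\<^sub>m n + N) ^\<^sub>m (2 ^ k) = 1\<^sub>m n + N ^\<^sub>m (2 ^ k)"
proof (induct k)
  case (Suc k)
  let ?M = "N ^\<^sub>m (2 ^ k)"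
  have M: "?M \<in> carrier_mat n n" using N by simp
  have "(1\<^sub>m n + N) ^\<^sub>m (2 ^ Suc k) = (1\<^sub>m n + N) ^\<^sub>m (2 ^ k) * (1\<^sub>m n + N) ^\<^sub>m (2 ^ k)"
    using pow_mat_add[of "1\<^sub>m n + N" n "2 ^ k" "2 ^ k"] N by (simp add: mult_2)
  also have "\<dots> = (1\<^sub>m n + ?M) * (1\<^sub>m n + ?M)" by (simp only: Suc)
  also have "\<dots> = 1\<^sub>m n + ?M * ?M" by (rule one_plus_square_bit[OF M])
  also have "?M * ?M = N ^\<^sub>m (2 ^ Suc k)"
    using pow_mat_add[OF N, of "2 ^ k" "2 ^ k"] by (simp add: mult_2)
  finally show ?case .
qed (use N in simp)

lemma (in monoid) Units_if_nat_pow_eq_one: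
  fixes n :: nat
  assumes x: "x \<in> carrier G" and pow: "x [^] n = \<one>" and n: "0 < n"
  shows "x \<in> Units G"
proof -
  have n_eq: "Suc (n - 1) = n" using n by simp
  have "x [^] (n - 1) \<otimes> x = \<one>" using pow nat_pow_Suc[of x "n - 1"] n_eq by simp
  moreover have "x \<otimes> x [^] (n - 1) = \<one>" using pow nat_pow_Suc2[OF x, of "n - 1"] n_eq by simp
  ultimately show ?thesis using x unfolding Units_def by auto
qed

lemma n_torsion_clean_if_clean_with_torsion:
  assumes "clean_with_torsion R n" and "1 \<le> n"
  shows "\<exists>n' \<le> n. n_torsion_clean R n'"
proof -
  let ?P = "\<lambda>n. 1 \<le> n \<and> clean_with_torsion R n"
  have "?P (LEAST n. ?P n)" and "(LEAST n. ?P n) \<le> n"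
    using LeastI[of ?P n] Least_le[of ?P n] assms by auto
  moreover have "\<not> clean_with_torsion R n'" if "1 \<le> n'" "n' < (LEAST n. ?P n)" for n'
    using not_less_Least[OF that(2)] that(1) by blast
  ultimately show ?thesis unfolding n_torsion_clean_def by blast
qed

lemma clean_with_torsion_mat_bit:
  assumes m: "m \<le> 2 ^ k"
  shows "clean_with_torsion (ring_mat TYPE(bit) m ()) (2 ^ k)"
  unfolding clean_with_torsion_def
proof
  let ?R = "ring_mat TYPE(bit) m ()"
  interpret R: semiring ?R by (rule semiring_mat)
  fix r assume "r \<in> carrier ?R"
  then have r: "r \<in> carrier_mat m m" by (simp add: ring_mat_simps)
  obtain E N where E: "E \<in> carrier_mat m m" and N: "N \<in> carrier_mat m m"
    and idem: "E * E = E" and nilp: "N ^\<^sub>m m = 0\<^sub>m m m" and sum: "r + 1\<^sub>m m = E + N"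
    using nil_clean_mat_bit[of "r + 1\<^sub>m m" m] r by (auto elim: nil_clean_matE)
  define u where "u = 1\<^sub>m m + N"
  have u: "u \<in> carrier_mat m m" using N by (simp add: u_def)
  have "N ^\<^sub>m (2 ^ k) = 0\<^sub>m m m"
    using pow_mat_add[OF N, of m "2 ^ k - m"] nilp m N by simp
  then have u_pow: "u ^\<^sub>m (2 ^ k) = 1\<^sub>m m"
    using one_plus_pow_two_pow[OF N, of k] N by (simp add: u_def)
  then have "u \<in> Units ?R"
    using R.Units_if_nat_pow_eq_one[of u "2 ^ k :: nat"] u pow_mat_ring_pow[OF u, of "2 ^ k" "()"]
    by (simp add: ring_mat_simps)
  moreover have "r = E + u"
  proof -
    have "r = (r + 1\<^sub>m m) + 1\<^sub>m m"
      using r mat_add_self_bit[of "1\<^sub>m m" m m] by (simp add: assoc_add_mat[of _ m m])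
    also have "\<dots> = E + u"
      unfolding sum u_def using E N by (simp add: assoc_add_mat[of _ m m] comm_add_mat[of N m m])
    finally show ?thesis .
  qed
  ultimately show "\<exists>e \<in> carrier ?R. \<exists>u \<in> Units ?R.
      e \<otimes>\<^bsub>?R\<^esub> e = e \<and> u [^]\<^bsub>?R\<^esub> ((2 :: nat) ^ k) = \<one>\<^bsub>?R\<^esub> \<and> r = e \<oplus>\<^bsub>?R\<^esub> u"
    using E idem u_pow pow_mat_ring_pow[OF u, of "2 ^ k" "()"]
    by (intro bexI[of _ E] bexI[of _ u]) (auto simp: ring_mat_simps)
qed

theorem proposition1p6:
  fixes m k :: nat
  assumes "m \<le> 2 ^ k"
  shows "\<exists>n. n \<le> 2 ^ k \<and> n_torsion_clean (ring_mat TYPE(bit) m ()) n"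
  using n_torsion_clean_if_clean_with_torsion[OF clean_with_torsion_mat_bit[OF assms]] by simp

end
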